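(* Let $D$ and $E$ be Banach spaces, $(\Omega,\mu)$ a measure space with a $\sigma$-additive $\sigma$-finite measure, and $A\subset L(D)$ a Banach algebra of operators isomorphic to $L^\infty_\mu(\Omega,L(E))$. Let $G$ be a discrete group and $g\mapsto T_g$ a representation of $G$ by isometries of $D$ with $T_gAT_g^{-1}=A$ for all $g$. If $G$ acts metrically freely (in the sense of the context), then $B(A,T_g)$ possesses property ( * ): for every finite sum $b=\sum_{g} a_gT_g$ with $a_g\in A$, $\|b\|\ge\|a_e\|$, where $e$ is the identity of $G$.
   Context: $B(A,T_g)$ is the closed subalgebra of $L(D)$ generated by $A$ and $\{T_g\}_{g\in G}$. $\hat T_g(a)=T_gaT_g^{-1}$ is an automorphism of $A$ and preserves its center $Z(A)\cong L^\infty_\mu(\Omega)$ (scalar-valued functions times the identity). For a measurable set $\Delta$, let $\chi_\Delta\in Z(A)$ be the element corresponding to its characteristic function; $\hat T_g(\chi_\Delta)$ is a central projection $\chi_{\tilde\Delta}$ and one sets $\alpha_g(\Delta)=\tilde\Delta$ (sets modulo null sets). $G$ acts metrically freely if for every finite $\{g_1,\dots,g_k\}\subset G$ and every measurable $\Delta$ with $\mu(\Delta)>0$ there is a measurable $\Delta'\subset\Delta$ with $\mu(\Delta')>0$ and $\mu(\alpha_{g_i}(\Delta')\cap\alpha_{g_j}(\Delta'))=0$ for $i\neq j$. *)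

theory Defs
  imports "HOL-Analysis.Analysis" "HOL-Probability.Essential_Supremum"
begin

text \<open>Elements of L-infinity(Omega, L(E)) are represented by measurable functions
  Omega -> L(E) with finite essential supremum of the operator norm, modulo a.e. equality.\<close>

definition Linf_fun :: "'w measure \<Rightarrow> ('w \<Rightarrow> ('e::banach \<Rightarrow>\<^sub>L 'e)) \<Rightarrow> bool" where
  "Linf_fun M f \<longleftrightarrow> f \<in> borel_measurable M \<and> esssup M (\<lambda>x. ereal (norm (f x))) < \<infinity>"

definition Linf_norm :: "'w measure \<Rightarrow> ('w \<Rightarrow> ('e::banach \<Rightarrow>\<^sub>L 'e)) \<Rightarrow> real" where
  "Linf_norm M f = real_of_ereal (max 0 (esssup M (\<lambda>x. ereal (norm (f x)))))"

definition banach_operator_algebra :: "('d::banach \<Rightarrow>\<^sub>L 'd) set \<Rightarrow> bool" where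
  "banach_operator_algebra A \<longleftrightarrow> 0 \<in> A \<and> closed A \<and>
     (\<forall>a\<in>A. \<forall>b\<in>A. a + b \<in> A \<and> a o\<^sub>L b \<in> A) \<and> (\<forall>c. \<forall>a\<in>A. c *\<^sub>R a \<in> A)"

definition Linf_iso ::
  "'w measure \<Rightarrow> ('d::banach \<Rightarrow>\<^sub>L 'd) set \<Rightarrow> (('w \<Rightarrow> ('e::banach \<Rightarrow>\<^sub>L 'e)) \<Rightarrow> ('d \<Rightarrow>\<^sub>L 'd)) \<Rightarrow> bool" where
  "Linf_iso M A \<phi> \<longleftrightarrow>
     (\<forall>f. Linf_fun M f \<longrightarrow> \<phi> f \<in> A) \<and>
     (\<forall>a\<in>A. \<exists>f. Linf_fun M f \<and> \<phi> f = a) \<and>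
     (\<forall>f g. Linf_fun M f \<and> Linf_fun M g \<longrightarrow> (\<phi> f = \<phi> g \<longleftrightarrow> (AE x in M. f x = g x))) \<and>
     (\<forall>f g. Linf_fun M f \<and> Linf_fun M g \<longrightarrow> \<phi> (\<lambda>x. f x + g x) = \<phi> f + \<phi> g) \<and>
     (\<forall>f c. Linf_fun M f \<longrightarrow> \<phi> (\<lambda>x. c *\<^sub>R f x) = c *\<^sub>R \<phi> f) \<and>
     (\<forall>f g. Linf_fun M f \<and> Linf_fun M g \<longrightarrow> \<phi> (\<lambda>x. f x o\<^sub>L g x) = \<phi> f o\<^sub>L \<phi> g) \<and>
     (\<forall>f. Linf_fun M f \<longrightarrow> norm (\<phi> f) = Linf_norm M f)"

definition chi_elem :: "(('w \<Rightarrow> ('e::banach \<Rightarrow>\<^sub>L 'e)) \<Rightarrow> ('d::banach \<Rightarrow>\<^sub>L 'd)) \<Rightarrow> 'w set \<Rightarrow> ('d \<Rightarrow>\<^sub>L 'd)" where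
  "chi_elem \<phi> \<Delta> = \<phi> (\<lambda>x. indicator \<Delta> x *\<^sub>R id_blinfun)"

text \<open>alpha_g(Delta) = Delta' means T_g chi_Delta T_g^{-1} = chi_Delta' (sets mod null sets).\<close>
definition alpha_rel ::
  "'w measure \<Rightarrow> (('w \<Rightarrow> ('e::banach \<Rightarrow>\<^sub>L 'e)) \<Rightarrow> ('d::banach \<Rightarrow>\<^sub>L 'd)) \<Rightarrow> ('g::group_add \<Rightarrow> ('d \<Rightarrow>\<^sub>L 'd))
     \<Rightarrow> 'g \<Rightarrow> 'w set \<Rightarrow> 'w set \<Rightarrow> bool" where
  "alpha_rel M \<phi> T g \<Delta> \<Delta>' \<longleftrightarrow> \<Delta>' \<in> sets M \<and> T g o\<^sub>L chi_elem \<phi> \<Delta> o\<^sub>L T (- g) = chi_elem \<phi> \<Delta>'"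

definition metrically_free ::
  "'w measure \<Rightarrow> (('w \<Rightarrow> ('e::banach \<Rightarrow>\<^sub>L 'e)) \<Rightarrow> ('d::banach \<Rightarrow>\<^sub>L 'd)) \<Rightarrow> ('g::group_add \<Rightarrow> ('d \<Rightarrow>\<^sub>L 'd)) \<Rightarrow> bool" where
  "metrically_free M \<phi> T \<longleftrightarrow>
     (\<forall>F \<Delta>. finite F \<and> \<Delta> \<in> sets M \<and> emeasure M \<Delta> > 0 \<longrightarrow>
        (\<exists>\<Delta>'\<in>sets M. \<Delta>' \<subseteq> \<Delta> \<and> emeasure M \<Delta>' > 0 \<and>
           (\<forall>g\<in>F. \<forall>h\<in>F. g \<noteq> h \<longrightarrow>
              (\<forall>\<Delta>g \<Delta>h. alpha_rel M \<phi> T g \<Delta>' \<Delta>g \<and> alpha_rel M \<phi> T h \<Delta>' \<Delta>h \<longrightarrow>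
                 emeasure M (\<Delta>g \<inter> \<Delta>h) = 0))))"

end

theory Submission
  imports Defs
begin

text \<open>Suppose norm (a 0) > c. Let f represent a 0 and let \<Delta> be the set of positive measure
  where norm (f x) > c. Metric freeness, applied to S together with 0, shrinks \<Delta> to \<Delta>' whose
  translates alpha g \<Delta>' (g \<in> S, g \<noteq> 0) are a.e. disjoint from \<Delta>'. Compressing
  b = (\<Sum>g\<in>S. a g o T g) by the central projection \<chi> = chi_elem \<phi> \<Delta>' kills every term with g \<noteq> 0,
  since \<chi> a g T g \<chi> = a g \<chi> \<chi>' T g with \<chi>' the projection of alpha g \<Delta>'. Hence
  \<chi> b \<chi> = \<chi> (a 0) \<chi>, whose norm is at least c, while norm (\<chi> b \<chi>) \<le> norm b.

  The technical point is that T g \<chi> T (-g) is again of the form chi_elem: it is a central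
  idempotent of A, and central idempotents of L-infinity(\<Omega>, L(E)) are indicator functions,
  because the centre of L(E) consists of scalars (by a Hahn-Banach functional).\<close>

section \<open>Norming functionals\<close>

text \<open>Linear functionals on subspaces that are dominated by the norm, encoded by their graphs so
  that Zorn's lemma can be applied to the subset order.\<close>
definition norm_dominated_graph :: "('a::real_normed_vector \<times> real) set \<Rightarrow> bool" where
  "norm_dominated_graph G \<longleftrightarrow>
     (\<forall>x a b. (x, a) \<in> G \<longrightarrow> (x, b) \<in> G \<longrightarrow> a = b) \<and>
     (\<forall>x a y b. (x, a) \<in> G \<longrightarrow> (y, b) \<in> G \<longrightarrow> (x + y, a + b) \<in> G) \<and>
     (\<forall>x a c. (x, a) \<in> G \<longrightarrow> (c *\<^sub>R x, c * a) \<in> G) \<and>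
     (\<forall>x a. (x, a) \<in> G \<longrightarrow> a \<le> norm x)"

lemma norm_dominated_graphD:
  assumes "norm_dominated_graph G"
  shows norm_dominated_graph_unique: "(x, a) \<in> G \<Longrightarrow> (x, b) \<in> G \<Longrightarrow> a = b"
    and norm_dominated_graph_add: "(x, a) \<in> G \<Longrightarrow> (y, b) \<in> G \<Longrightarrow> (x + y, a + b) \<in> G"
    and norm_dominated_graph_scaleR: "(x, a) \<in> G \<Longrightarrow> (c *\<^sub>R x, c * a) \<in> G"
    and norm_dominated_graph_le: "(x, a) \<in> G \<Longrightarrow> a \<le> norm x"
  using assms unfolding norm_dominated_graph_def by blast+

lemma norm_dominated_graph_line: "norm_dominated_graph {(c *\<^sub>R v, c * norm v) | c. True}"
  (is "norm_dominated_graph ?L")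
  unfolding norm_dominated_graph_def
proof (intro conjI allI impI)
  fix x a b assume "(x, a) \<in> ?L" "(x, b) \<in> ?L"
  then obtain c d where "x = c *\<^sub>R v" "a = c * norm v" "x = d *\<^sub>R v" "b = d * norm v"
    by blast
  then show "a = b" by (cases "v = 0") (auto dest: scaleR_cancel_right[THEN iffD1])
next
  fix x a y b assume "(x, a) \<in> ?L" "(y, b) \<in> ?L"
  then obtain c d where "x = c *\<^sub>R v" "a = c * norm v" "y = d *\<^sub>R v" "b = d * norm v"
    by blast
  then show "(x + y, a + b) \<in> ?L"
    by (auto intro!: exI[of _ "c + d"] simp: scaleR_add_left distrib_right)
next
  fix x a e assume "(x, a) \<in> ?L"
  then obtain c where "x = c *\<^sub>R v" "a = c * norm v" by blast
  then show "(e *\<^sub>R x, e * a) \<in> ?L"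
    by (auto intro!: exI[of _ "e * c"])
next
  fix x a assume "(x, a) \<in> ?L"
  then show "a \<le> norm x" by (auto simp: mult_right_mono)
qed

lemma norm_dominated_graph_Union_chain:
  assumes "C \<noteq> {}" "subset.chain {G. norm_dominated_graph G} C"
  shows "norm_dominated_graph (\<Union>C)"
proof -
  have dom: "norm_dominated_graph G" if "G \<in> C" for G
    using assms(2) that unfolding subset.chain_def by blast
  have common: "\<exists>G\<in>C. p \<in> G \<and> q \<in> G" if pq: "p \<in> \<Union>C" "q \<in> \<Union>C" for p q
  proof -
    obtain G H where "G \<in> C" "p \<in> G" "H \<in> C" "q \<in> H" using pq by blast
    moreover have "G \<subseteq> H \<or> H \<subseteq> G"
      using assms(2) \<open>G \<in> C\<close> \<open>H \<in> C\<close> unfolding subset.chain_def by blast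
    ultimately show ?thesis by blast
  qed
  show ?thesis
    unfolding norm_dominated_graph_def
  proof (intro conjI allI impI)
    fix x a b assume "(x, a) \<in> \<Union>C" "(x, b) \<in> \<Union>C"
    then obtain G where "G \<in> C" "(x, a) \<in> G" "(x, b) \<in> G" using common by blast
    then show "a = b" using dom unfolding norm_dominated_graph_def by blast
  next
    fix x a y b assume "(x, a) \<in> \<Union>C" "(y, b) \<in> \<Union>C"
    then obtain G where "G \<in> C" "(x, a) \<in> G" "(y, b) \<in> G" using common by blast
    then show "(x + y, a + b) \<in> \<Union>C" using dom unfolding norm_dominated_graph_def by blast
  next
    fix x a c assume "(x, a) \<in> \<Union>C"
    then obtain G where "G \<in> C" "(x, a) \<in> G" by blast
    then show "(c *\<^sub>R x, c * a) \<in> \<Union>C" using dom unfolding norm_dominated_graph_def by blast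
  next
    fix x a assume "(x, a) \<in> \<Union>C"
    then obtain G where "G \<in> C" "(x, a) \<in> G" by blast
    then show "a \<le> norm x" using dom unfolding norm_dominated_graph_def by blast
  qed
qed

text \<open>The one-step extension of the Hahn--Banach theorem: the value c at z is squeezed
  between the sup of a - norm (y - z) and the inf of norm (y + z) - a over (y, a) \<in> G,
  which are in order because norm (y + y') \<le> norm (y - z) + norm (y' + z).\<close>
lemma norm_dominated_extension_value:
  assumes G: "norm_dominated_graph G" "G \<noteq> {}"
  obtains c where "\<And>y a. (y, a) \<in> G \<Longrightarrow> a - norm (y - z) \<le> c"
    and "\<And>y a. (y, a) \<in> G \<Longrightarrow> c \<le> norm (y + z) - a"
proof -
  note G_add = norm_dominated_graph_add[OF G(1)] and G_le = norm_dominated_graph_le[OF G(1)]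
  have G0: "(0, 0) \<in> G"
    using G(2) norm_dominated_graph_scaleR[OF G(1), of _ _ 0] by fastforce
  define L where "L = {a - norm (y - z) | y a. (y, a) \<in> G}"
  have below: "l \<le> norm (y' + z) - a'" if "l \<in> L" "(y', a') \<in> G" for l y' a'
  proof -
    obtain y a where l: "l = a - norm (y - z)" "(y, a) \<in> G" using \<open>l \<in> L\<close> unfolding L_def by blast
    have "a + a' \<le> norm (y + y')" using G_le[OF G_add[OF l(2) that(2)]] .
    also have "\<dots> \<le> norm (y - z) + norm (y' + z)"
      using norm_triangle_ineq[of "y - z" "y' + z"] by simp
    finally show ?thesis using l by simp
  qed
  have "L \<noteq> {}" using G0 unfolding L_def by blast
  have "bdd_above L" using below[OF _ G0] by (intro bdd_aboveI[of _ "norm z"]) simp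
  then have "a - norm (y - z) \<le> Sup L" if "(y, a) \<in> G" for y a
    using that by (intro cSup_upper) (auto simp: L_def)
  moreover have "Sup L \<le> norm (y + z) - a" if "(y, a) \<in> G" for y a
    using \<open>L \<noteq> {}\<close> below that by (intro cSup_least) auto
  ultimately show thesis by (rule that)
qed

lemma norm_dominated_extension_le:
  assumes G: "norm_dominated_graph G" and xa: "(x, a) \<in> G"
    and lower: "\<And>y a. (y, a) \<in> G \<Longrightarrow> a - norm (y - z) \<le> c"
    and upper: "\<And>y a. (y, a) \<in> G \<Longrightarrow> c \<le> norm (y + z) - a"
  shows "a + t * c \<le> norm (x + t *\<^sub>R z)"
proof (cases t "0::real" rule: linorder_cases)
  case less
  have "x + t *\<^sub>R z = (- t) *\<^sub>R ((- 1 / t) *\<^sub>R x - z)"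
    using less by (simp add: algebra_simps)
  then have "norm (x + t *\<^sub>R z) = - t * norm ((- 1 / t) *\<^sub>R x - z)"
    using less by simp
  then have "a - norm (x + t *\<^sub>R z) = - t * ((- 1 / t) * a - norm ((- 1 / t) *\<^sub>R x - z))"
    using less by (simp add: field_simps)
  also have "\<dots> \<le> - t * c"
    using lower[OF norm_dominated_graph_scaleR[OF G xa, of "- 1 / t"]] less
    by (intro mult_left_mono) auto
  finally show ?thesis by simp
next
  case greater
  have "x + t *\<^sub>R z = t *\<^sub>R ((1 / t) *\<^sub>R x + z)"
    using greater by (simp add: algebra_simps)
  then have "norm (x + t *\<^sub>R z) = t * norm ((1 / t) *\<^sub>R x + z)"
    using greater by simp
  then have "norm (x + t *\<^sub>R z) - a = t * (norm ((1 / t) *\<^sub>R x + z) - (1 / t) * a)"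
    using greater by (simp add: field_simps)
  also have "\<dots> \<ge> t * c"
    using upper[OF norm_dominated_graph_scaleR[OF G xa, of "1 / t"]] greater
    by (intro mult_left_mono) auto
  finally show ?thesis by simp
qed (use norm_dominated_graph_le[OF G xa] in simp)

lemma norm_dominated_graph_extend:
  assumes G: "norm_dominated_graph G" "G \<noteq> {}" and z: "z \<notin> Domain G"
  shows "\<exists>G'. norm_dominated_graph G' \<and> G \<subseteq> G' \<and> z \<in> Domain G'"
proof -
  note G_unique = norm_dominated_graph_unique[OF G(1)] and G_add = norm_dominated_graph_add[OF G(1)]
    and G_scaleR = norm_dominated_graph_scaleR[OF G(1)]
  obtain c where lower: "\<And>y a. (y, a) \<in> G \<Longrightarrow> a - norm (y - z) \<le> c"
    and upper: "\<And>y a. (y, a) \<in> G \<Longrightarrow> c \<le> norm (y + z) - a"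
    using norm_dominated_extension_value[OF G] by blast
  define G' where "G' = {(x + t *\<^sub>R z, a + t * c) | x a t. (x, a) \<in> G}"
  have G'I: "(x + t *\<^sub>R z, a + t * c) \<in> G'" if "(x, a) \<in> G" for x a t
    unfolding G'_def using that by blast
  have unique_t: "t = t'" if "(x, a) \<in> G" "(x', a') \<in> G" "x + t *\<^sub>R z = x' + t' *\<^sub>R z"
    for x a x' a' t t'
  proof (rule ccontr)
    assume "t \<noteq> t'"
    have "(t - t') *\<^sub>R z = x' - x" using that(3) by (simp add: algebra_simps)
    then have "z = (1 / (t - t')) *\<^sub>R (x' - x)"
      using \<open>t \<noteq> t'\<close> by (auto simp flip: \<open>(t - t') *\<^sub>R z = x' - x\<close>)
    moreover have "(x' - x, a' - a) \<in> G" using G_add[OF that(2) G_scaleR[OF that(1), of "-1"]] by simp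
    ultimately show False using G_scaleR z by (metis Domain.DomainI)
  qed
  have "norm_dominated_graph G'"
    unfolding norm_dominated_graph_def
  proof (intro conjI allI impI)
    fix x a b assume "(x, a) \<in> G'" "(x, b) \<in> G'"
    then obtain x1 a1 t1 x2 a2 t2 where
      ab: "a = a1 + t1 * c" "(x1, a1) \<in> G" "b = a2 + t2 * c" "(x2, a2) \<in> G"
      and x: "x = x1 + t1 *\<^sub>R z" "x = x2 + t2 *\<^sub>R z"
      unfolding G'_def by blast
    then have "t1 = t2" using unique_t[OF ab(2) ab(4)] by simp
    with x have "x1 = x2" by simp
    with ab \<open>t1 = t2\<close> show "a = b" using G_unique by blast
  next
    fix x a y b assume "(x, a) \<in> G'" "(y, b) \<in> G'"
    then obtain x1 a1 t1 x2 a2 t2 where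
      "x = x1 + t1 *\<^sub>R z" "a = a1 + t1 * c" "(x1, a1) \<in> G"
      "y = x2 + t2 *\<^sub>R z" "b = a2 + t2 * c" "(x2, a2) \<in> G"
      unfolding G'_def by blast
    moreover have "(x1 + x2 + (t1 + t2) *\<^sub>R z, a1 + a2 + (t1 + t2) * c) \<in> G'"
      using G'I[OF G_add] calculation by blast
    ultimately show "(x + y, a + b) \<in> G'" by (simp add: algebra_simps)
  next
    fix x a e assume "(x, a) \<in> G'"
    then obtain x1 a1 t where "x = x1 + t *\<^sub>R z" "a = a1 + t * c" "(x1, a1) \<in> G"
      unfolding G'_def by blast
    moreover have "(e *\<^sub>R x1 + (e * t) *\<^sub>R z, e * a1 + (e * t) * c) \<in> G'"
      using G'I[OF G_scaleR] calculation by blast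
    ultimately show "(e *\<^sub>R x, e * a) \<in> G'" by (simp add: algebra_simps)
  next
    fix x a assume "(x, a) \<in> G'"
    then obtain x1 a1 t where "x = x1 + t *\<^sub>R z" "a = a1 + t * c" "(x1, a1) \<in> G"
      unfolding G'_def by blast
    then show "a \<le> norm x" using norm_dominated_extension_le[OF G(1) _ lower upper] by simp
  qed
  moreover have "G \<subseteq> G'" using G'I[of _ _ 0] by auto
  moreover have "z \<in> Domain G'"
    using G(2) G'I[of _ _ 1] G_scaleR[of _ _ 0] by fastforce
  ultimately show ?thesis by blast
qed

lemma exists_bounded_linear_functional_norm:
  fixes v :: "'a::real_normed_vector"
  shows "\<exists>f::'a \<Rightarrow> real. bounded_linear f \<and> f v = norm v"
proof -
  let ?\<G> = "{G. norm_dominated_graph G \<and> (v, norm v) \<in> G}"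
  have "(1 *\<^sub>R v, 1 * norm v) \<in> {(c *\<^sub>R v, c * norm v) | c. True}" by blast
  then have "{(c *\<^sub>R v, c * norm v) | c. True} \<in> ?\<G>"
    using norm_dominated_graph_line by simp
  then have "?\<G> \<noteq> {}" by blast
  moreover have "\<Union>C \<in> ?\<G>" if "C \<noteq> {}" "subset.chain ?\<G> C" for C
  proof -
    have "subset.chain {G. norm_dominated_graph G} C" "\<forall>G\<in>C. (v, norm v) \<in> G"
      using that(2) unfolding subset.chain_def by blast+
    then show ?thesis using norm_dominated_graph_Union_chain[OF that(1)] that(1) by blast
  qed
  ultimately obtain G where G: "norm_dominated_graph G" "(v, norm v) \<in> G"
    and maximal: "\<And>G'. G' \<in> ?\<G> \<Longrightarrow> G \<subseteq> G' \<Longrightarrow> G' = G"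
    using subset_Zorn_nonempty[of ?\<G>] by blast
  have total: "x \<in> Domain G" for x
  proof (rule ccontr)
    assume "x \<notin> Domain G"
    moreover obtain G' where "norm_dominated_graph G'" "G \<subseteq> G'" "x \<in> Domain G'"
      using norm_dominated_graph_extend[OF G(1) _ \<open>x \<notin> Domain G\<close>] G(2) by blast
    ultimately show False using maximal[of G'] G(2) by blast
  qed
  note G_unique = norm_dominated_graph_unique[OF G(1)] and G_add = norm_dominated_graph_add[OF G(1)]
    and G_scaleR = norm_dominated_graph_scaleR[OF G(1)] and G_le = norm_dominated_graph_le[OF G(1)]
  define f where "f x = (THE a. (x, a) \<in> G)" for x
  have f_eq: "f x = a" if "(x, a) \<in> G" for x a
    unfolding f_def using that G_unique by blast
  have f_graph: "(x, f x) \<in> G" for x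
    using total[of x] f_eq by force
  have add: "f (x + y) = f x + f y" for x y
    using f_eq[OF G_add[OF f_graph f_graph]] .
  have scale: "f (r *\<^sub>R x) = r *\<^sub>R f x" for r x
    using f_eq[OF G_scaleR[OF f_graph]] by simp
  have "norm (f x) \<le> norm x * 1" for x
    using G_le[OF f_graph, of x] G_le[OF f_graph, of "-x"] scale[of "-1" x] by simp
  then have "bounded_linear f"
    using add scale by (intro bounded_linear_intro[of f 1]) auto
  then show ?thesis using f_eq[OF G(2)] by blast
qed

section \<open>The centre of L(E)\<close>

lemma blinfun_central_eq_scaleR_id:
  fixes t :: "'a::real_normed_vector \<Rightarrow>\<^sub>L 'a"
  assumes central: "\<And>r. t o\<^sub>L r = r o\<^sub>L t"
  shows "\<exists>c. t = c *\<^sub>R id_blinfun"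
proof (cases "\<exists>v::'a. v \<noteq> 0")
  case False
  have "t x = (0 *\<^sub>R id_blinfun) x" for x
  proof -
    have "x = 0" using False by blast
    then show ?thesis by simp
  qed
  then have "t = 0 *\<^sub>R id_blinfun" by (rule blinfun_eqI)
  then show ?thesis ..
next
  case True
  then obtain v :: 'a where "v \<noteq> 0" by blast
  obtain \<psi> :: "'a \<Rightarrow> real" where \<psi>: "bounded_linear \<psi>" "\<psi> v = norm v"
    using exists_bounded_linear_functional_norm by blast
  define c where "c = \<psi> (t v) / norm v"
  have "t w = c *\<^sub>R w" for w
  proof -
    have bl: "bounded_linear (\<lambda>z. \<psi> z *\<^sub>R w)"
      using bounded_linear_scaleR_left[of w] \<psi>(1) by (rule bounded_linear_compose)
    \<comment> \<open>t commutes with the rank-one operator z \<mapsto> \<psi>(z) w\<close>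
    define r where "r = Blinfun (\<lambda>z. \<psi> z *\<^sub>R w)"
    have r: "r z = \<psi> z *\<^sub>R w" for z
      unfolding r_def using bounded_linear_Blinfun_apply[OF bl] by simp
    have "t (r v) = r (t v)"
      using central[of r] by (metis blinfun_apply_blinfun_compose)
    then have "norm v *\<^sub>R t w = \<psi> (t v) *\<^sub>R w"
      by (simp add: r \<psi>(2) blinfun.scaleR_right)
    then have "inverse (norm v) *\<^sub>R (norm v *\<^sub>R t w) = inverse (norm v) *\<^sub>R (\<psi> (t v) *\<^sub>R w)"
      by simp
    then show ?thesis using \<open>v \<noteq> 0\<close> by (simp add: c_def divide_inverse mult.commute)
  qed
  then have "t = c *\<^sub>R id_blinfun"
    by (intro blinfun_eqI) (simp add: scaleR_blinfun.rep_eq)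
  then show ?thesis ..
qed

lemma blinfun_central_idempotent:
  fixes t :: "'a::real_normed_vector \<Rightarrow>\<^sub>L 'a"
  assumes idem: "t o\<^sub>L t = t" and central: "\<And>r. t o\<^sub>L r = r o\<^sub>L t"
  shows "t = 0 \<or> t = id_blinfun"
proof (cases "\<exists>x::'a. x \<noteq> 0")
  case True
  then obtain x :: 'a where "x \<noteq> 0" by blast
  obtain c where c: "t = c *\<^sub>R id_blinfun"
    using blinfun_central_eq_scaleR_id central by blast
  have "t (t x) = t x"
    using idem by (metis blinfun_apply_blinfun_compose)
  then have "(c * c) *\<^sub>R x = c *\<^sub>R x" by (simp add: c scaleR_blinfun.rep_eq)
  then have "c * c = c" using \<open>x \<noteq> 0\<close> by simp
  then have "c = 0 \<or> c = 1" by simp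
  then show ?thesis unfolding c by (elim disjE) simp_all
next
  case False
  have "blinfun_apply t x = blinfun_apply 0 x" for x
  proof -
    have "x = 0" using False by blast
    then show ?thesis by simp
  qed
  then have "t = 0" by (rule blinfun_eqI)
  then show ?thesis ..
qed

lemma blinfun_commute_of_commute_unit_ball:
  fixes t :: "'a::real_normed_vector \<Rightarrow>\<^sub>L 'a"
  assumes unit: "\<And>r. norm r \<le> 1 \<Longrightarrow> t o\<^sub>L r = r o\<^sub>L t"
  shows "t o\<^sub>L r = r o\<^sub>L t"
proof (cases "r = 0")
  case False
  have "t o\<^sub>L (r /\<^sub>R norm r) = (r /\<^sub>R norm r) o\<^sub>L t"
    using False by (intro unit) simp
  then have "t (r z /\<^sub>R norm r) = r (t z) /\<^sub>R norm r" for z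
    by (metis blinfun_apply_blinfun_compose scaleR_blinfun.rep_eq)
  then show ?thesis
    using False by (intro blinfun_eqI) (simp add: blinfun.scaleR_right)
qed simp

section \<open>Borel selections\<close>

lemma exists_least_index:
  fixes U :: "'i \<Rightarrow> 'a set"
  obtains least :: "'a \<Rightarrow> 'i"
  where "\<And>c. c \<in> \<Union>(range U) \<Longrightarrow> c \<in> U (least c)"
    and "\<And>c c'. c \<in> \<Union>(range U) \<Longrightarrow> c' \<in> \<Union>(range U) \<Longrightarrow> least c \<noteq> least c' \<Longrightarrow>
           c \<notin> U (least c') \<or> c' \<notin> U (least c)"
proof -
  obtain R :: "'i rel" where R: "Well_order R" "Field R = UNIV"
    using well_ordering[where 'a='i] by auto
  define lt where "lt i j \<longleftrightarrow> (i, j) \<in> R - Id" for i j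
  have wf: "wf (R - Id)" using R(1) by (simp add: well_order_on_def)
  have total: "lt i j \<or> lt j i" if "i \<noteq> j" for i j
  proof -
    have "total_on UNIV R" using R by (metis well_order_on_def linear_order_on_def)
    then show ?thesis using that unfolding lt_def total_on_def by blast
  qed
  define least_index where "least_index c i \<longleftrightarrow> c \<in> U i \<and> (\<forall>j. lt j i \<longrightarrow> c \<notin> U j)" for c i
  have least_index_ex: "\<exists>i. least_index c i" if c: "c \<in> \<Union>(range U)" for c
  proof -
    obtain i where "i \<in> {i. c \<in> U i}" using c by blast
    from wfE_min[OF wf this] obtain z
      where "z \<in> {i. c \<in> U i}" "\<And>y. (y, z) \<in> R - Id \<Longrightarrow> y \<notin> {i. c \<in> U i}"
      by blast
    then have "least_index c z" unfolding least_index_def lt_def by blast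
    then show ?thesis ..
  qed
  define least where "least c = (SOME i. least_index c i)" for c
  have least: "c \<in> U (least c)" "\<And>j. lt j (least c) \<Longrightarrow> c \<notin> U j" if "c \<in> \<Union>(range U)" for c
    using someI_ex[OF least_index_ex[OF that]] unfolding least_def least_index_def by blast+
  show thesis
  proof (rule that)
    show "c \<in> U (least c)" if "c \<in> \<Union>(range U)" for c
      using least(1)[OF that] .
    show "c \<notin> U (least c') \<or> c' \<notin> U (least c)"
      if "c \<in> \<Union>(range U)" "c' \<in> \<Union>(range U)" "least c \<noteq> least c'" for c c'
      using total[OF that(3)] least(2)[OF that(1)] least(2)[OF that(2)] by blast
  qed
qed

text \<open>A disjoint refinement in countably many layers, as in Stone's theorem: V i n is the union
  of the balls of radius 1/(n+1) around the points whose least index is i and which lie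
  3/(n+1)-deep inside U i. Balls of one layer around points with different least indices cannot
  meet.\<close>
lemma open_cover_disjoint_layers:
  fixes U :: "'i \<Rightarrow> 'a::metric_space set"
  assumes opn: "\<And>i. open (U i)"
  obtains V :: "'i \<Rightarrow> nat \<Rightarrow> 'a set"
  where "\<And>i n. open (V i n)" "\<And>i n. V i n \<subseteq> U i"
    and "\<And>n. disjoint_family (\<lambda>i. V i n)"
    and "\<And>x. x \<in> \<Union>(range U) \<Longrightarrow> \<exists>i n. x \<in> V i n"
proof -
  obtain least :: "'a \<Rightarrow> 'i" where least_in: "\<And>c. c \<in> \<Union>(range U) \<Longrightarrow> c \<in> U (least c)"
    and least_sep: "\<And>c c'. c \<in> \<Union>(range U) \<Longrightarrow> c' \<in> \<Union>(range U) \<Longrightarrow> least c \<noteq> least c' \<Longrightarrow>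
           c \<notin> U (least c') \<or> c' \<notin> U (least c)"
    using exists_least_index[of U] by blast
  define \<delta> where "\<delta> n = 1 / real (Suc n)" for n
  have \<delta>_pos: "\<delta> n > 0" for n unfolding \<delta>_def by simp
  define V where "V i n = \<Union>{ball c (\<delta> n) | c. c \<in> \<Union>(range U) \<and> least c = i \<and> ball c (3 * \<delta> n) \<subseteq> U i}"
    for i n
  have "open (V i n)" for i n unfolding V_def by auto
  moreover have "V i n \<subseteq> U i" for i n
  proof
    fix x assume "x \<in> V i n"
    then obtain c where "x \<in> ball c (\<delta> n)" "ball c (3 * \<delta> n) \<subseteq> U i" unfolding V_def by blast
    moreover have "ball c (\<delta> n) \<subseteq> ball c (3 * \<delta> n)" using \<delta>_pos[of n] by (intro subset_ball) simp
    ultimately show "x \<in> U i" by blast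
  qed
  moreover have "disjoint_family (\<lambda>i. V i n)" for n
    unfolding disjoint_family_on_def
  proof (intro ballI impI equals0I)
    fix i j x assume "i \<noteq> j" and "x \<in> V i n \<inter> V j n"
    then have x: "x \<in> V i n" "x \<in> V j n" by auto
    obtain c where c: "x \<in> ball c (\<delta> n)" "c \<in> \<Union>(range U)" "least c = i" "ball c (3 * \<delta> n) \<subseteq> U i"
      using x(1) unfolding V_def by blast
    obtain c' where c': "x \<in> ball c' (\<delta> n)" "c' \<in> \<Union>(range U)" "least c' = j" "ball c' (3 * \<delta> n) \<subseteq> U j"
      using x(2) unfolding V_def by blast
    have "dist c c' \<le> dist c x + dist x c'" by (rule dist_triangle)
    also have "\<dots> < \<delta> n + \<delta> n" using c(1) c'(1) by (simp add: dist_commute add_strict_mono)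
    finally have "dist c c' < 3 * \<delta> n" using \<delta>_pos[of n] by simp
    then have "c' \<in> U i" "c \<in> U j"
      using c(4) c'(4) by (auto simp: dist_commute)
    with least_sep[OF c(2) c'(2)] c(3) c'(3) \<open>i \<noteq> j\<close> show False by blast
  qed
  moreover have "\<exists>i n. t \<in> V i n" if t: "t \<in> \<Union>(range U)" for t
  proof -
    obtain e where e: "e > 0" "ball t e \<subseteq> U (least t)"
      using opn least_in[OF t] open_contains_ball by blast
    obtain n where "3 / e < real n" using reals_Archimedean2 by blast
    then have "3 / e < real (Suc n)" by simp
    then have "3 < e * real (Suc n)" using e(1) by (simp add: divide_less_eq mult.commute)
    then have "3 * \<delta> n < e" unfolding \<delta>_def by (simp add: divide_less_eq mult.commute)
    then have "ball t (3 * \<delta> n) \<subseteq> ball t e" by (intro subset_ball) simp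
    then have "ball t (3 * \<delta> n) \<subseteq> U (least t)" using e(2) by (rule subset_trans)
    moreover have "t \<in> ball t (\<delta> n)" using \<delta>_pos by simp
    ultimately have "t \<in> V (least t) n" using t unfolding V_def by blast
    then show ?thesis by blast
  qed
  ultimately show thesis by (rule that)
qed

lemma exists_layer_selection:
  fixes V :: "'i \<Rightarrow> nat \<Rightarrow> 'a set" and dflt :: 'i
  assumes disj: "\<And>n. disjoint_family (\<lambda>i. V i n)"
  obtains F :: "'a \<Rightarrow> 'i"
  where "\<And>t i n. t \<in> V i n \<Longrightarrow> (\<And>m. m < n \<Longrightarrow> t \<notin> (\<Union>j. V j m)) \<Longrightarrow> F t = i"
    and "\<And>t. t \<notin> (\<Union>i n. V i n) \<Longrightarrow> F t = dflt"
    and "\<And>t. t \<in> (\<Union>i n. V i n) \<Longrightarrow> \<exists>n. t \<in> V (F t) n"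
proof -
  define layer where "layer t = (LEAST n. t \<in> (\<Union>j. V j n))" for t
  define F where "F t = (if t \<in> (\<Union>i n. V i n) then (THE i. t \<in> V i (layer t)) else dflt)" for t
  have F_eq: "F t = i" if "t \<in> V i (layer t)" for t i
  proof -
    have "(THE i. t \<in> V i (layer t)) = i"
      using that disj[of "layer t"] unfolding disjoint_family_on_def by blast
    then show ?thesis using that unfolding F_def by auto
  qed
  show thesis
  proof (rule that)
    show "F t = i" if t: "t \<in> V i n" and lower: "\<And>m. m < n \<Longrightarrow> t \<notin> (\<Union>j. V j m)" for t i n
    proof -
      have "layer t = n"
        unfolding layer_def using t lower by (intro Least_equality) (auto simp: not_less[symmetric])
      with t show ?thesis by (intro F_eq) simp
    qed
    show "F t = dflt" if "t \<notin> (\<Union>i n. V i n)" for t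
      using that unfolding F_def by simp
    show "\<exists>n. t \<in> V (F t) n" if "t \<in> (\<Union>i n. V i n)" for t
    proof -
      have "\<exists>n. t \<in> (\<Union>j. V j n)" using that by blast
      then have "t \<in> (\<Union>j. V j (layer t))" unfolding layer_def by (rule LeastI_ex)
      then obtain i where "t \<in> V i (layer t)" by blast
      then show ?thesis using F_eq by blast
    qed
  qed
qed

lemma borel_measurable_layer_selection:
  fixes V :: "'i \<Rightarrow> nat \<Rightarrow> 'a::topological_space set" and \<Phi> :: "'a \<Rightarrow> 'i \<Rightarrow> 'c::topological_space"
  assumes opn: "\<And>i n. open (V i n)"
    and F_sel: "\<And>t i n. t \<in> V i n \<Longrightarrow> (\<And>m. m < n \<Longrightarrow> t \<notin> (\<Union>j. V j m)) \<Longrightarrow> F t = i"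
    and F_dflt: "\<And>t. t \<notin> (\<Union>i n. V i n) \<Longrightarrow> F t = dflt"
    and cont: "\<And>i. continuous_on UNIV (\<lambda>t. \<Phi> t i)"
  shows "(\<lambda>t. \<Phi> t (F t)) \<in> borel_measurable borel"
proof (rule borel_measurableI)
  fix S :: "'c set" assume "open S"
  then have open_pre: "open {t. \<Phi> t i \<in> S}" for i
    using cont continuous_on_open_vimage[of UNIV "\<lambda>t. \<Phi> t i"] by (simp add: vimage_def)
  define W where "W n = (\<Union>j. V j n)" for n
  define covered where "covered = (\<Union>i n. V i n)"
  have pre_eq: "(\<lambda>t. \<Phi> t (F t)) -` S =
     (\<Union>m. (\<Union>i. V i m \<inter> {t. \<Phi> t i \<in> S}) - (\<Union>j<m. W j)) \<union> (- covered \<inter> {t. \<Phi> t dflt \<in> S})"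
    (is "_ = ?P")
  proof (intro set_eqI iffI)
    fix t assume t: "t \<in> (\<lambda>t. \<Phi> t (F t)) -` S"
    show "t \<in> ?P"
    proof (cases "t \<in> covered")
      case True
      define n where "n = (LEAST n. t \<in> W n)"
      have "\<exists>n. t \<in> W n" using True unfolding covered_def W_def by blast
      then have "t \<in> W n" unfolding n_def by (rule LeastI_ex)
      then obtain i where i: "t \<in> V i n" unfolding W_def by blast
      have lower: "t \<notin> W m" if "m < n" for m
        using that not_less_Least unfolding n_def by blast
      then have "F t = i" using F_sel[OF i] unfolding W_def by blast
      with i lower t show ?thesis by blast
    next
      case False
      then show ?thesis using t F_dflt unfolding covered_def by simp
    qed
  next
    fix t assume "t \<in> ?P"
    then show "t \<in> (\<lambda>t. \<Phi> t (F t)) -` S"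
    proof
      assume "t \<in> (\<Union>m. (\<Union>i. V i m \<inter> {t. \<Phi> t i \<in> S}) - (\<Union>j<m. W j))"
      then obtain m i where "t \<in> V i m" "\<Phi> t i \<in> S" "\<And>j. j < m \<Longrightarrow> t \<notin> W j" by blast
      then show ?thesis using F_sel unfolding W_def by fastforce
    next
      assume "t \<in> - covered \<inter> {t. \<Phi> t dflt \<in> S}"
      then show ?thesis using F_dflt unfolding covered_def by simp
    qed
  qed
  have "open (\<Union>i. V i m \<inter> {t. \<Phi> t i \<in> S})" for m
    using opn open_pre by blast
  moreover have "open (\<Union>j<m. W j)" for m
    unfolding W_def using opn by blast
  moreover have "open covered"
    unfolding covered_def using opn by blast
  ultimately have "?P \<in> sets borel"
    using open_pre by (intro sets.Un sets.countable_UN sets.Diff sets.Int borel_open borel_closed) auto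
  then show "(\<lambda>t. \<Phi> t (F t)) -` S \<inter> space borel \<in> sets borel" using pre_eq by simp
qed

lemma borel_selection_open_cover:
  fixes U :: "'i \<Rightarrow> 'a::metric_space set" and dflt :: 'i
  assumes "\<And>i. open (U i)"
  obtains F :: "'a \<Rightarrow> 'i"
  where "\<And>t. t \<in> \<Union>(range U) \<Longrightarrow> t \<in> U (F t)"
    and "\<And>t. t \<notin> \<Union>(range U) \<Longrightarrow> F t = dflt"
    and "\<And>\<Phi> :: 'a \<Rightarrow> 'i \<Rightarrow> 'c::topological_space. (\<And>i. continuous_on UNIV (\<lambda>t. \<Phi> t i)) \<Longrightarrow>
           (\<lambda>t. \<Phi> t (F t)) \<in> borel_measurable borel"
proof -
  obtain V :: "'i \<Rightarrow> nat \<Rightarrow> 'a set" where opn: "\<And>i n. open (V i n)" and sub: "\<And>i n. V i n \<subseteq> U i"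
    and disj: "\<And>n. disjoint_family (\<lambda>i. V i n)"
    and cover: "\<And>x. x \<in> \<Union>(range U) \<Longrightarrow> \<exists>i n. x \<in> V i n"
    using open_cover_disjoint_layers[of U, OF assms] by blast
  obtain F :: "'a \<Rightarrow> 'i"
    where F_sel: "\<And>t i n. t \<in> V i n \<Longrightarrow> (\<And>m. m < n \<Longrightarrow> t \<notin> (\<Union>j. V j m)) \<Longrightarrow> F t = i"
    and F_dflt: "\<And>t. t \<notin> (\<Union>i n. V i n) \<Longrightarrow> F t = dflt"
    and F_in: "\<And>t. t \<in> (\<Union>i n. V i n) \<Longrightarrow> \<exists>n. t \<in> V (F t) n"
    using exists_layer_selection[of V dflt, OF disj] by blast
  show thesis
  proof (rule that)
    show "t \<in> U (F t)" if "t \<in> \<Union>(range U)" for t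
      using F_in[of t] cover[OF that] sub by blast
    show "F t = dflt" if "t \<notin> \<Union>(range U)" for t
      using F_dflt[of t] that sub by blast
    show "(\<lambda>t. \<Phi> t (F t)) \<in> borel_measurable borel"
      if "\<And>i. continuous_on UNIV (\<lambda>t. \<Phi> t i)" for \<Phi> :: "'a \<Rightarrow> 'i \<Rightarrow> 'c"
      using opn F_sel F_dflt that by (rule borel_measurable_layer_selection)
  qed
qed

section \<open>Essentially bounded operator functions\<close>

lemma Linf_fun_borel_measurable: "Linf_fun M f \<Longrightarrow> f \<in> borel_measurable M"
  unfolding Linf_fun_def by blast

lemma esssup_norm_le:
  fixes f :: "'w \<Rightarrow> 'b::real_normed_vector"
  assumes "f \<in> borel_measurable M" and "AE x in M. norm (f x) \<le> C"
  shows "esssup M (\<lambda>x. ereal (norm (f x))) \<le> ereal C"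
proof -
  have "(\<lambda>x. ereal (norm (f x))) \<in> borel_measurable M"
    using assms(1) by measurable
  then show ?thesis
    using assms(2) by (intro esssup_I) auto
qed

lemma Linf_funI:
  fixes f :: "'w \<Rightarrow> ('e::banach \<Rightarrow>\<^sub>L 'e)"
  assumes "f \<in> borel_measurable M" and "AE x in M. norm (f x) \<le> C"
  shows "Linf_fun M f"
  using esssup_norm_le[OF assms] assms(1) unfolding Linf_fun_def by (auto simp: le_less_trans)

lemma Linf_norm_nonneg: "0 \<le> Linf_norm M f"
  unfolding Linf_norm_def by (simp add: real_of_ereal_pos)

lemma AE_norm_le_Linf_norm:
  fixes f :: "'w \<Rightarrow> ('e::banach \<Rightarrow>\<^sub>L 'e)"
  assumes "Linf_fun M f"
  shows "AE x in M. norm (f x) \<le> Linf_norm M f"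
proof -
  have fin: "esssup M (\<lambda>x. ereal (norm (f x))) < \<infinity>"
    using assms unfolding Linf_fun_def by blast
  have real_max: "n \<le> real_of_ereal (max 0 e)" if "ereal n \<le> e" "e < \<infinity>" "0 \<le> n" for n e
    using that by (cases e) auto
  show ?thesis using esssup_AE[of "\<lambda>x. ereal (norm (f x))" M]
    unfolding Linf_norm_def by eventually_elim (use fin real_max in auto)
qed

lemma Linf_norm_le:
  fixes f :: "'w \<Rightarrow> ('e::banach \<Rightarrow>\<^sub>L 'e)"
  assumes f: "f \<in> borel_measurable M" and bound: "AE x in M. norm (f x) \<le> C" and "0 \<le> C"
  shows "Linf_norm M f \<le> C"
proof -
  have "max 0 (esssup M (\<lambda>x. ereal (norm (f x)))) \<le> ereal C"
    using esssup_norm_le[OF f bound] \<open>0 \<le> C\<close> by simp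
  then show ?thesis unfolding Linf_norm_def
    by (cases "max 0 (esssup M (\<lambda>x. ereal (norm (f x))))") auto
qed

lemma Linf_norm_ge:
  fixes f :: "'w \<Rightarrow> ('e::banach \<Rightarrow>\<^sub>L 'e)"
  assumes f: "Linf_fun M f" and B: "B \<in> sets M" "emeasure M B > 0"
    and bound: "\<And>x. x \<in> B \<Longrightarrow> c \<le> norm (f x)"
  shows "c \<le> Linf_norm M f"
proof (rule ccontr)
  assume "\<not> c \<le> Linf_norm M f"
  have "AE x in M. x \<notin> B"
    using AE_norm_le_Linf_norm[OF f]
    by eventually_elim (use bound \<open>\<not> c \<le> Linf_norm M f\<close> in force)
  then have "B \<in> null_sets M" using AE_iff_null_sets[OF B(1)] by blast
  with B(2) show False by (simp add: null_setsD1)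
qed

lemma emeasure_norm_gt_pos:
  fixes f :: "'w \<Rightarrow> ('e::banach \<Rightarrow>\<^sub>L 'e)"
  assumes f: "f \<in> borel_measurable M" and "0 \<le> c" "c < Linf_norm M f"
  shows "emeasure M {x \<in> space M. c < norm (f x)} > 0"
proof (rule ccontr)
  have "{x \<in> space M. c < norm (f x)} \<in> sets M"
    using f by measurable
  moreover assume "\<not> emeasure M {x \<in> space M. c < norm (f x)} > 0"
  ultimately have "AE x in M. norm (f x) \<le> c"
    by (subst AE_iff_measurable[where N="{x \<in> space M. c < norm (f x)}"]) (auto simp: not_le)
  then have "Linf_norm M f \<le> c" using Linf_norm_le[OF f] \<open>0 \<le> c\<close> by blast
  with \<open>c < Linf_norm M f\<close> show False by simp
qed

lemma Linf_fun_compose: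
  fixes f g :: "'w \<Rightarrow> ('e::banach \<Rightarrow>\<^sub>L 'e)"
  assumes "Linf_fun M f" "Linf_fun M g" "(\<lambda>x. f x o\<^sub>L g x) \<in> borel_measurable M"
  shows "Linf_fun M (\<lambda>x. f x o\<^sub>L g x)"
proof (rule Linf_funI[OF assms(3)])
  show "AE x in M. norm (f x o\<^sub>L g x) \<le> Linf_norm M f * Linf_norm M g"
    using AE_norm_le_Linf_norm[OF assms(1)] AE_norm_le_Linf_norm[OF assms(2)]
  proof eventually_elim
    case (elim x)
    then have "norm (f x) * norm (g x) \<le> Linf_norm M f * Linf_norm M g"
      by (intro mult_mono) (auto simp: Linf_norm_nonneg)
    then show ?case using norm_blinfun_compose[of "f x" "g x"] by linarith
  qed
qed

lemma Linf_fun_zero: "Linf_fun M (\<lambda>x. 0 :: 'e::banach \<Rightarrow>\<^sub>L 'e)"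
  by (rule Linf_funI[where C=0]) auto

lemma Linf_fun_indicator:
  assumes "B \<in> sets M"
  shows "Linf_fun M (\<lambda>x. indicator B x *\<^sub>R (id_blinfun :: 'e::banach \<Rightarrow>\<^sub>L 'e))"
proof (rule Linf_funI[where C=1])
  have "(\<lambda>x. indicator B x *\<^sub>R (id_blinfun :: 'e \<Rightarrow>\<^sub>L 'e)) = (\<lambda>x. if x \<in> B then id_blinfun else 0)"
    by (auto simp: indicator_def)
  then show "(\<lambda>x. indicator B x *\<^sub>R (id_blinfun :: 'e \<Rightarrow>\<^sub>L 'e)) \<in> borel_measurable M"
    using assms by (simp add: measurable_If_set)
  show "AE x in M. norm (indicator B x *\<^sub>R (id_blinfun :: 'e \<Rightarrow>\<^sub>L 'e)) \<le> 1"
    using norm_blinfun_id_le by (auto simp: indicator_def)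
qed

lemma Linf_fun_restrict:
  fixes f :: "'w \<Rightarrow> ('e::banach \<Rightarrow>\<^sub>L 'e)"
  assumes f: "Linf_fun M f" and B: "B \<in> sets M"
  shows "Linf_fun M (\<lambda>x. if x \<in> B then f x else 0)"
proof (rule Linf_funI[where C="Linf_norm M f"])
  show "(\<lambda>x. if x \<in> B then f x else 0) \<in> borel_measurable M"
    using B Linf_fun_borel_measurable[OF f] by (intro measurable_If_set) auto
  show "AE x in M. norm (if x \<in> B then f x else 0) \<le> Linf_norm M f"
    using AE_norm_le_Linf_norm[OF f] by eventually_elim (auto simp: Linf_norm_nonneg)
qed

locale Linf_algebra =
  fixes M :: "'w measure"
    and A :: "('d::banach \<Rightarrow>\<^sub>L 'd) set"
    and \<phi> :: "('w \<Rightarrow> ('e::banach \<Rightarrow>\<^sub>L 'e)) \<Rightarrow> ('d \<Rightarrow>\<^sub>L 'd)"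
  assumes Linf_iso: "Linf_iso M A \<phi>"
begin

lemma image_in: "Linf_fun M f \<Longrightarrow> \<phi> f \<in> A"
  and surj: "a \<in> A \<Longrightarrow> \<exists>f. Linf_fun M f \<and> \<phi> f = a"
  and eq_iff_AE: "Linf_fun M f \<Longrightarrow> Linf_fun M g \<Longrightarrow> \<phi> f = \<phi> g \<longleftrightarrow> (AE x in M. f x = g x)"
  and mult: "Linf_fun M f \<Longrightarrow> Linf_fun M g \<Longrightarrow> \<phi> (\<lambda>x. f x o\<^sub>L g x) = \<phi> f o\<^sub>L \<phi> g"
  and scaleR: "Linf_fun M f \<Longrightarrow> \<phi> (\<lambda>x. c *\<^sub>R f x) = c *\<^sub>R \<phi> f"
  and norm_eq: "Linf_fun M f \<Longrightarrow> norm (\<phi> f) = Linf_norm M f"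
  using Linf_iso unfolding Linf_iso_def by blast+

lemma map_zero: "\<phi> (\<lambda>x. 0) = 0"
  using scaleR[OF Linf_fun_zero, of 0] by simp

lemma chi_elem_in: "B \<in> sets M \<Longrightarrow> chi_elem \<phi> B \<in> A"
  unfolding chi_elem_def by (intro image_in Linf_fun_indicator)

lemma norm_chi_elem_le:
  assumes "B \<in> sets M"
  shows "norm (chi_elem \<phi> B) \<le> 1"
proof -
  have "norm (chi_elem \<phi> B) = Linf_norm M (\<lambda>x. indicator B x *\<^sub>R (id_blinfun :: 'e \<Rightarrow>\<^sub>L 'e))"
    unfolding chi_elem_def using norm_eq Linf_fun_indicator[OF assms] by blast
  also have "\<dots> \<le> 1"
    using Linf_fun_borel_measurable[OF Linf_fun_indicator[OF assms]] norm_blinfun_id_le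
    by (intro Linf_norm_le) (auto simp: indicator_def)
  finally show ?thesis .
qed

lemma chi_elem_mult:
  assumes "B \<in> sets M" "C \<in> sets M"
  shows "chi_elem \<phi> B o\<^sub>L chi_elem \<phi> C = chi_elem \<phi> (B \<inter> C)"
proof -
  have "(indicator B x *\<^sub>R id_blinfun) o\<^sub>L (indicator C x *\<^sub>R id_blinfun) =
      indicator (B \<inter> C) x *\<^sub>R (id_blinfun :: 'e \<Rightarrow>\<^sub>L 'e)" for x
    by (rule blinfun_eqI) (simp add: indicator_def scaleR_blinfun.rep_eq)
  then show ?thesis
    unfolding chi_elem_def using mult[OF Linf_fun_indicator[OF assms(1)] Linf_fun_indicator[OF assms(2)]]
    by simp
qed

lemma chi_elem_commute:
  assumes "B \<in> sets M" "a \<in> A"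
  shows "chi_elem \<phi> B o\<^sub>L a = a o\<^sub>L chi_elem \<phi> B"
proof -
  obtain f where f: "Linf_fun M f" "\<phi> f = a" using surj[OF assms(2)] by blast
  have "(indicator B x *\<^sub>R id_blinfun) o\<^sub>L f x = f x o\<^sub>L (indicator B x *\<^sub>R id_blinfun)" for x
    by (rule blinfun_eqI) (simp add: scaleR_blinfun.rep_eq blinfun.scaleR_right)
  then show ?thesis
    unfolding chi_elem_def
    using mult[OF Linf_fun_indicator[OF assms(1)] f(1)] mult[OF f(1) Linf_fun_indicator[OF assms(1)]] f(2)
    by simp
qed

lemma chi_elem_null:
  assumes "B \<in> sets M" "emeasure M B = 0"
  shows "chi_elem \<phi> B = 0"
proof -
  have "AE x in M. x \<notin> B"
    using assms AE_iff_null_sets by (blast intro: null_setsI)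
  then have "AE x in M. indicator B x *\<^sub>R (id_blinfun :: 'e \<Rightarrow>\<^sub>L 'e) = 0"
    by eventually_elim simp
  then show ?thesis
    unfolding chi_elem_def using eq_iff_AE[OF Linf_fun_indicator[OF assms(1)] Linf_fun_zero] map_zero by simp
qed

lemma chi_elem_compress:
  assumes f: "Linf_fun M f" and B: "B \<in> sets M"
  shows "chi_elem \<phi> B o\<^sub>L \<phi> f o\<^sub>L chi_elem \<phi> B = \<phi> (\<lambda>x. if x \<in> B then f x else 0)"
proof -
  define fB where "fB x = (if x \<in> B then f x else 0)" for x
  have fB: "Linf_fun M fB" unfolding fB_def using Linf_fun_restrict[OF f B] .
  have "(\<lambda>x. (indicator B x *\<^sub>R id_blinfun) o\<^sub>L f x) = fB"
    by (intro ext blinfun_eqI) (simp add: fB_def indicator_def scaleR_blinfun.rep_eq)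
  then have "chi_elem \<phi> B o\<^sub>L \<phi> f = \<phi> fB"
    unfolding chi_elem_def using mult[OF Linf_fun_indicator[OF B] f] by simp
  moreover have "(\<lambda>x. fB x o\<^sub>L (indicator B x *\<^sub>R id_blinfun)) = fB"
    by (intro ext blinfun_eqI) (simp add: fB_def indicator_def scaleR_blinfun.rep_eq)
  then have "\<phi> fB o\<^sub>L chi_elem \<phi> B = \<phi> fB"
    unfolding chi_elem_def using mult[OF fB Linf_fun_indicator[OF B]] by simp
  ultimately show ?thesis unfolding fB_def by simp
qed

lemma norm_chi_elem_compress_ge:
  assumes f: "Linf_fun M f" and \<Delta>: "\<Delta> \<in> sets M" "emeasure M \<Delta> > 0"
    and bound: "\<And>x. x \<in> \<Delta> \<Longrightarrow> c \<le> norm (f x)"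
  shows "c \<le> norm (chi_elem \<phi> \<Delta> o\<^sub>L \<phi> f o\<^sub>L chi_elem \<phi> \<Delta>)"
proof -
  have "c \<le> Linf_norm M (\<lambda>x. if x \<in> \<Delta> then f x else 0)"
    by (rule Linf_norm_ge[OF Linf_fun_restrict[OF f \<Delta>(1)] \<Delta>]) (simp add: bound)
  also have "\<dots> = norm (chi_elem \<phi> \<Delta> o\<^sub>L \<phi> f o\<^sub>L chi_elem \<phi> \<Delta>)"
    using chi_elem_compress[OF f \<Delta>(1)] norm_eq[OF Linf_fun_restrict[OF f \<Delta>(1)]] by simp
  finally show ?thesis .
qed

text \<open>Since L(E) need not be separable, the null sets on which h x fails to commute with the
  individual operators cannot simply be collected. Instead a Borel selection picks, at every
  non-central value, a non-commuting witness of norm at most 1.\<close>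
lemma AE_commute_of_central:
  assumes h: "Linf_fun M h" and central: "\<And>k. Linf_fun M k \<Longrightarrow> \<phi> h o\<^sub>L \<phi> k = \<phi> k o\<^sub>L \<phi> h"
  shows "AE x in M. \<forall>r. h x o\<^sub>L r = r o\<^sub>L h x"
proof -
  define U where "U r = {t :: 'e \<Rightarrow>\<^sub>L 'e. norm r \<le> 1 \<and> t o\<^sub>L r \<noteq> r o\<^sub>L t}" for r :: "'e \<Rightarrow>\<^sub>L 'e"
  have U_open: "open (U r)" for r
  proof (cases "norm r \<le> 1")
    case True
    have "open {t :: 'e \<Rightarrow>\<^sub>L 'e. t o\<^sub>L r \<noteq> r o\<^sub>L t}"
      by (intro open_Collect_neq continuous_intros)
    with True show ?thesis unfolding U_def by simp
  qed (simp add: U_def)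
  have hm: "h \<in> borel_measurable M" using Linf_fun_borel_measurable[OF h] .
  show ?thesis
  proof (rule borel_selection_open_cover[of U 0, OF U_open])
    fix F :: "('e \<Rightarrow>\<^sub>L 'e) \<Rightarrow> ('e \<Rightarrow>\<^sub>L 'e)"
    assume F_in: "\<And>t. t \<in> \<Union>(range U) \<Longrightarrow> t \<in> U (F t)"
      and F_dflt: "\<And>t. t \<notin> \<Union>(range U) \<Longrightarrow> F t = 0"
      and F_meas: "\<And>\<Phi> :: ('e \<Rightarrow>\<^sub>L 'e) \<Rightarrow> ('e \<Rightarrow>\<^sub>L 'e) \<Rightarrow> ('e \<Rightarrow>\<^sub>L 'e).
        (\<And>i. continuous_on UNIV (\<lambda>t. \<Phi> t i)) \<Longrightarrow> (\<lambda>t. \<Phi> t (F t)) \<in> borel_measurable borel"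
    define k where "k x = F (h x)" for x
    have "norm (F t) \<le> 1" for t
    proof (cases "t \<in> \<Union>(range U)")
      case True
      then show ?thesis using F_in unfolding U_def by blast
    qed (simp add: F_dflt)
    moreover have "F \<in> borel_measurable borel"
      using F_meas[of "\<lambda>t i. i"] by simp
    ultimately have k: "Linf_fun M k"
      unfolding k_def using hm by (intro Linf_funI[where C=1]) auto
    have "(\<lambda>t. t o\<^sub>L F t) \<in> borel_measurable borel" "(\<lambda>t. F t o\<^sub>L t) \<in> borel_measurable borel"
      using F_meas[of "\<lambda>t i. t o\<^sub>L i"] F_meas[of "\<lambda>t i. i o\<^sub>L t"] by (simp_all add: continuous_intros)
    then have hk: "Linf_fun M (\<lambda>x. h x o\<^sub>L k x)" and kh: "Linf_fun M (\<lambda>x. k x o\<^sub>L h x)"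
      unfolding k_def using hm
      by (auto intro!: Linf_fun_compose[OF h k[unfolded k_def]] Linf_fun_compose[OF k[unfolded k_def] h]
               measurable_compose[OF hm])
    have "\<phi> (\<lambda>x. h x o\<^sub>L k x) = \<phi> (\<lambda>x. k x o\<^sub>L h x)"
      using mult[OF h k] mult[OF k h] central[OF k] by simp
    then have "AE x in M. h x o\<^sub>L k x = k x o\<^sub>L h x"
      using eq_iff_AE[OF hk kh] by simp
    then show ?thesis
    proof eventually_elim
      fix x assume commutes: "h x o\<^sub>L k x = k x o\<^sub>L h x"
      have "h x \<notin> \<Union>(range U)"
        using F_in[of "h x"] commutes unfolding U_def k_def by auto
      then have "h x o\<^sub>L r = r o\<^sub>L h x" if "norm r \<le> 1" for r
        using that unfolding U_def by blast
      then show "\<forall>r. h x o\<^sub>L r = r o\<^sub>L h x"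
        using blinfun_commute_of_commute_unit_ball by blast
    qed
  qed
qed

lemma central_idempotent_eq_chi_elem:
  assumes p: "p \<in> A" and idem: "p o\<^sub>L p = p" and central: "\<And>a. a \<in> A \<Longrightarrow> p o\<^sub>L a = a o\<^sub>L p"
  shows "\<exists>B\<in>sets M. p = chi_elem \<phi> B"
proof -
  obtain h where h: "Linf_fun M h" "\<phi> h = p" using surj[OF p] by blast
  have hm: "h \<in> borel_measurable M" using Linf_fun_borel_measurable[OF h(1)] .
  have "(\<lambda>t::'e \<Rightarrow>\<^sub>L 'e. t o\<^sub>L t) \<in> borel_measurable borel"
    by (intro borel_measurable_continuous_onI continuous_intros)
  then have hh: "Linf_fun M (\<lambda>x. h x o\<^sub>L h x)"
    using Linf_fun_compose[OF h(1) h(1)] measurable_compose[OF hm] by blast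
  have "\<phi> (\<lambda>x. h x o\<^sub>L h x) = \<phi> h"
    using mult[OF h(1) h(1)] idem h(2) by simp
  then have "AE x in M. h x o\<^sub>L h x = h x"
    using eq_iff_AE[OF hh h(1)] by blast
  moreover have "AE x in M. \<forall>r. h x o\<^sub>L r = r o\<^sub>L h x"
  proof (rule AE_commute_of_central[OF h(1)])
    fix k :: "'w \<Rightarrow> 'e \<Rightarrow>\<^sub>L 'e" assume "Linf_fun M k"
    then show "\<phi> h o\<^sub>L \<phi> k = \<phi> k o\<^sub>L \<phi> h" using central[OF image_in] h(2) by simp
  qed
  ultimately have "AE x in M. h x = 0 \<or> h x = id_blinfun"
    by eventually_elim (rule blinfun_central_idempotent; blast)
  define B where "B = h -` {id_blinfun} \<inter> space M"
  have B: "B \<in> sets M"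
    unfolding B_def by (rule measurable_sets[OF hm]) simp
  have "AE x in M. h x = indicator B x *\<^sub>R id_blinfun"
    using \<open>AE x in M. h x = 0 \<or> h x = id_blinfun\<close> AE_space
    by eventually_elim (auto simp: B_def indicator_def)
  then have "p = chi_elem \<phi> B"
    unfolding chi_elem_def using eq_iff_AE[OF h(1) Linf_fun_indicator[OF B]] h(2) by simp
  with B show ?thesis by blast
qed

end

section \<open>Compression of the crossed product\<close>

lemma norm_blinfun_compress_le:
  fixes p b :: "'a::real_normed_vector \<Rightarrow>\<^sub>L 'a"
  assumes "norm p \<le> 1"
  shows "norm (p o\<^sub>L b o\<^sub>L p) \<le> norm b"
proof -
  have "norm (p o\<^sub>L b o\<^sub>L p) \<le> norm (p o\<^sub>L b) * norm p"
    by (rule norm_blinfun_compose)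
  also have "\<dots> \<le> norm p * norm b * norm p"
    by (intro mult_right_mono norm_blinfun_compose norm_ge_zero)
  also have "\<dots> \<le> 1 * norm b * 1"
    using assms by (intro mult_mono) auto
  finally show ?thesis by simp
qed

lemma metrically_freeE:
  assumes "metrically_free M \<phi> T" "finite F" "\<Delta> \<in> sets M" "emeasure M \<Delta> > 0"
  obtains \<Delta>' where "\<Delta>' \<in> sets M" "\<Delta>' \<subseteq> \<Delta>" "emeasure M \<Delta>' > 0"
    "\<And>g h \<Delta>g \<Delta>h. g \<in> F \<Longrightarrow> h \<in> F \<Longrightarrow> g \<noteq> h \<Longrightarrow>
       alpha_rel M \<phi> T g \<Delta>' \<Delta>g \<Longrightarrow> alpha_rel M \<phi> T h \<Delta>' \<Delta>h \<Longrightarrow> emeasure M (\<Delta>g \<inter> \<Delta>h) = 0"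
proof -
  from assms(1) have "\<exists>\<Delta>'\<in>sets M. \<Delta>' \<subseteq> \<Delta> \<and> emeasure M \<Delta>' > 0 \<and>
      (\<forall>g\<in>F. \<forall>h\<in>F. g \<noteq> h \<longrightarrow> (\<forall>\<Delta>g \<Delta>h.
         alpha_rel M \<phi> T g \<Delta>' \<Delta>g \<and> alpha_rel M \<phi> T h \<Delta>' \<Delta>h \<longrightarrow> emeasure M (\<Delta>g \<inter> \<Delta>h) = 0))"
    unfolding metrically_free_def using assms(2-4) by blast
  then obtain \<Delta>' where "\<Delta>' \<in> sets M" "\<Delta>' \<subseteq> \<Delta>" "emeasure M \<Delta>' > 0"
    and free: "\<forall>g\<in>F. \<forall>h\<in>F. g \<noteq> h \<longrightarrow> (\<forall>\<Delta>g \<Delta>h.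
         alpha_rel M \<phi> T g \<Delta>' \<Delta>g \<and> alpha_rel M \<phi> T h \<Delta>' \<Delta>h \<longrightarrow> emeasure M (\<Delta>g \<inter> \<Delta>h) = 0)"
    by blast
  then show thesis
    by (intro that) auto
qed

locale covariant_system = Linf_algebra M A \<phi>
  for M :: "'w measure"
    and A :: "('d::banach \<Rightarrow>\<^sub>L 'd) set"
    and \<phi> :: "('w \<Rightarrow> ('e::banach \<Rightarrow>\<^sub>L 'e)) \<Rightarrow> ('d \<Rightarrow>\<^sub>L 'd)" +
  fixes T :: "'g::group_add \<Rightarrow> ('d \<Rightarrow>\<^sub>L 'd)"
  assumes T_zero: "T 0 = id_blinfun"
    and T_add: "\<And>g h. T (g + h) = T g o\<^sub>L T h"
    and conj_in: "\<And>g a. a \<in> A \<Longrightarrow> T g o\<^sub>L a o\<^sub>L T (- g) \<in> A"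
begin

lemma T_apply_inverse: "T g (T (- g) z) = z" "T (- g) (T g z) = z"
  using arg_cong[OF T_add[of g "- g"], of "\<lambda>S. blinfun_apply S z"]
    arg_cong[OF T_add[of "- g" g], of "\<lambda>S. blinfun_apply S z"]
  by (simp_all add: T_zero)

lemma alpha_rel_zero: "\<Delta> \<in> sets M \<Longrightarrow> alpha_rel M \<phi> T 0 \<Delta> \<Delta>"
  unfolding alpha_rel_def by (auto simp: T_zero intro: blinfun_eqI)

lemma alpha_rel_exists:
  assumes \<Delta>: "\<Delta> \<in> sets M"
  obtains \<Delta>' where "alpha_rel M \<phi> T g \<Delta> \<Delta>'"
proof -
  define q where "q = T g o\<^sub>L chi_elem \<phi> \<Delta> o\<^sub>L T (- g)"
  have "q \<in> A" unfolding q_def using conj_in chi_elem_in[OF \<Delta>] by blast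
  moreover have "q o\<^sub>L q = q"
  proof -
    have "chi_elem \<phi> \<Delta> (chi_elem \<phi> \<Delta> z) = chi_elem \<phi> \<Delta> z" for z
      using arg_cong[OF chi_elem_mult[OF \<Delta> \<Delta>], of "\<lambda>S. blinfun_apply S z"] by simp
    then show ?thesis
      unfolding q_def by (intro blinfun_eqI) (simp add: T_apply_inverse)
  qed
  moreover have "q o\<^sub>L a = a o\<^sub>L q" if a: "a \<in> A" for a
  proof (rule blinfun_eqI)
    fix z
    define a' where "a' = T (- g) o\<^sub>L a o\<^sub>L T (- (- g))"
    have "a' \<in> A" unfolding a'_def using conj_in[OF a] .
    then have commute: "chi_elem \<phi> \<Delta> (a' y) = a' (chi_elem \<phi> \<Delta> y)" for y
      using arg_cong[OF chi_elem_commute[OF \<Delta>], of a' "\<lambda>S. blinfun_apply S y"] by simp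
    have a'_apply: "T g (a' y) = a (T g y)" for y
      unfolding a'_def by (simp add: T_apply_inverse)
    have "T (- g) (a z) = a' (T (- g) z)"
      unfolding a'_def by (simp add: T_apply_inverse)
    then show "(q o\<^sub>L a) z = (a o\<^sub>L q) z"
      unfolding q_def using commute a'_apply by simp
  qed
  ultimately obtain \<Delta>' where "\<Delta>' \<in> sets M" "q = chi_elem \<phi> \<Delta>'"
    using central_idempotent_eq_chi_elem by blast
  then show thesis
    using that unfolding alpha_rel_def q_def by blast
qed

lemma compress_translate_eq_zero:
  assumes \<Delta>: "\<Delta> \<in> sets M" and a: "a \<in> A" and \<alpha>: "alpha_rel M \<phi> T g \<Delta> \<Delta>g"
    and null: "emeasure M (\<Delta>g \<inter> \<Delta>) = 0"
  shows "chi_elem \<phi> \<Delta> o\<^sub>L (a o\<^sub>L T g) o\<^sub>L chi_elem \<phi> \<Delta> = 0"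
proof (rule blinfun_eqI)
  fix z
  have \<Delta>g: "\<Delta>g \<in> sets M" and conj: "T g o\<^sub>L chi_elem \<phi> \<Delta> o\<^sub>L T (- g) = chi_elem \<phi> \<Delta>g"
    using \<alpha> unfolding alpha_rel_def by auto
  have "T g (chi_elem \<phi> \<Delta> y) = chi_elem \<phi> \<Delta>g (T g y)" for y
    using arg_cong[OF conj, of "\<lambda>S. blinfun_apply S (T g y)"] by (simp add: T_apply_inverse)
  moreover have "chi_elem \<phi> \<Delta> (a y) = a (chi_elem \<phi> \<Delta> y)" for y
    using arg_cong[OF chi_elem_commute[OF \<Delta> a], of "\<lambda>S. blinfun_apply S y"] by simp
  moreover have "chi_elem \<phi> (\<Delta> \<inter> \<Delta>g) = 0"
    using chi_elem_null[of "\<Delta> \<inter> \<Delta>g"] \<Delta> \<Delta>g null by (simp add: Int_commute)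
  then have "chi_elem \<phi> \<Delta> (chi_elem \<phi> \<Delta>g y) = 0" for y
    using arg_cong[OF chi_elem_mult[OF \<Delta> \<Delta>g], of "\<lambda>S. blinfun_apply S y"] by simp
  ultimately show "(chi_elem \<phi> \<Delta> o\<^sub>L (a o\<^sub>L T g) o\<^sub>L chi_elem \<phi> \<Delta>) z = blinfun_apply 0 z"
    by (simp add: blinfun.zero_right)
qed

lemma compress_crossed_sum:
  assumes S: "finite S" and a: "\<And>g. a g \<in> A" "\<And>g. g \<notin> S \<Longrightarrow> a g = 0"
    and \<Delta>: "\<Delta> \<in> sets M"
    and free: "\<And>g \<Delta>g. g \<in> S \<Longrightarrow> g \<noteq> 0 \<Longrightarrow> alpha_rel M \<phi> T g \<Delta> \<Delta>g \<Longrightarrow> emeasure M (\<Delta>g \<inter> \<Delta>) = 0"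
  shows "chi_elem \<phi> \<Delta> o\<^sub>L (\<Sum>g\<in>S. a g o\<^sub>L T g) o\<^sub>L chi_elem \<phi> \<Delta> = chi_elem \<phi> \<Delta> o\<^sub>L a 0 o\<^sub>L chi_elem \<phi> \<Delta>"
    (is "?X o\<^sub>L _ o\<^sub>L ?X = _")
proof -
  have summand: "?X o\<^sub>L (a g o\<^sub>L T g) o\<^sub>L ?X = (if g = 0 then ?X o\<^sub>L a 0 o\<^sub>L ?X else 0)" if "g \<in> S" for g
  proof (cases "g = 0")
    case True
    then show ?thesis by (auto simp: T_zero intro: blinfun_eqI)
  next
    case False
    obtain \<Delta>g where "alpha_rel M \<phi> T g \<Delta> \<Delta>g" using alpha_rel_exists[OF \<Delta>] .
    with False show ?thesis
      using compress_translate_eq_zero[OF \<Delta> a(1)] free[OF that False] by simp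
  qed
  have "?X o\<^sub>L (\<Sum>g\<in>S. a g o\<^sub>L T g) o\<^sub>L ?X = (\<Sum>g\<in>S. ?X o\<^sub>L (a g o\<^sub>L T g) o\<^sub>L ?X)"
    by (rule blinfun_eqI) (simp add: blinfun.sum_left blinfun.sum_right)
  also have "\<dots> = (\<Sum>g\<in>S. if g = 0 then ?X o\<^sub>L a 0 o\<^sub>L ?X else 0)"
    using summand by (rule sum.cong[OF refl])
  also have "\<dots> = ?X o\<^sub>L a 0 o\<^sub>L ?X"
    using S a(2)[of 0] by simp
  finally show ?thesis .
qed

lemma norm_crossed_sum_ge:
  assumes free: "metrically_free M \<phi> T" and S: "finite S"
    and a: "\<And>g. a g \<in> A" "\<And>g. g \<notin> S \<Longrightarrow> a g = 0"
    and c: "0 < c" "c < norm (a 0)"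
  shows "c \<le> norm (\<Sum>g\<in>S. a g o\<^sub>L T g)"
proof -
  define b where "b = (\<Sum>g\<in>S. a g o\<^sub>L T g)"
  obtain f where f: "Linf_fun M f" "\<phi> f = a 0" using surj[OF a(1)] by blast
  define \<Delta> where "\<Delta> = {x \<in> space M. c < norm (f x)}"
  have "\<Delta> \<in> sets M" unfolding \<Delta>_def using Linf_fun_borel_measurable[OF f(1)] by measurable
  moreover have "emeasure M \<Delta> > 0"
    unfolding \<Delta>_def using Linf_fun_borel_measurable[OF f(1)] c norm_eq[OF f(1)] f(2)
    by (intro emeasure_norm_gt_pos) auto
  ultimately obtain \<Delta>' where \<Delta>': "\<Delta>' \<in> sets M" "\<Delta>' \<subseteq> \<Delta>" "emeasure M \<Delta>' > 0"
    and disjoint: "\<And>g h \<Delta>g \<Delta>h. g \<in> insert 0 S \<Longrightarrow> h \<in> insert 0 S \<Longrightarrow> g \<noteq> h \<Longrightarrow>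
      alpha_rel M \<phi> T g \<Delta>' \<Delta>g \<Longrightarrow> alpha_rel M \<phi> T h \<Delta>' \<Delta>h \<Longrightarrow> emeasure M (\<Delta>g \<inter> \<Delta>h) = 0"
    using metrically_freeE[OF free, of "insert 0 S"] S by blast
  have compressed: "chi_elem \<phi> \<Delta>' o\<^sub>L b o\<^sub>L chi_elem \<phi> \<Delta>' = chi_elem \<phi> \<Delta>' o\<^sub>L a 0 o\<^sub>L chi_elem \<phi> \<Delta>'"
    unfolding b_def
  proof (rule compress_crossed_sum[OF S a \<Delta>'(1)])
    fix g \<Delta>g assume "g \<in> S" "g \<noteq> 0" "alpha_rel M \<phi> T g \<Delta>' \<Delta>g"
    then show "emeasure M (\<Delta>g \<inter> \<Delta>') = 0"
      using disjoint alpha_rel_zero[OF \<Delta>'(1)] by blast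
  qed
  have "c \<le> norm (f x)" if "x \<in> \<Delta>'" for x
    using that \<Delta>'(2) unfolding \<Delta>_def by auto
  then have "c \<le> norm (chi_elem \<phi> \<Delta>' o\<^sub>L a 0 o\<^sub>L chi_elem \<phi> \<Delta>')"
    using norm_chi_elem_compress_ge[OF f(1) \<Delta>'(1,3)] f(2) by simp
  also have "\<dots> = norm (chi_elem \<phi> \<Delta>' o\<^sub>L b o\<^sub>L chi_elem \<phi> \<Delta>')"
    using compressed by simp
  also have "\<dots> \<le> norm b"
    using norm_chi_elem_le[OF \<Delta>'(1)] by (rule norm_blinfun_compress_le)
  finally show ?thesis unfolding b_def .
qed

end

theorem theorem2p4:
  fixes M :: "'w measure"
    and A :: "('d::banach \<Rightarrow>\<^sub>L 'd) set"
    and \<phi> :: "('w \<Rightarrow> ('e::banach \<Rightarrow>\<^sub>L 'e)) \<Rightarrow> ('d \<Rightarrow>\<^sub>L 'd)"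
    and T :: "'g::group_add \<Rightarrow> ('d \<Rightarrow>\<^sub>L 'd)"
    and a :: "'g \<Rightarrow> ('d \<Rightarrow>\<^sub>L 'd)"
    and S :: "'g set"
  assumes "sigma_finite_measure M"
    and "banach_operator_algebra A"
    and "Linf_iso M A \<phi>"
    and "T 0 = id_blinfun"
    and "\<And>g h. T (g + h) = T g o\<^sub>L T h"
    and "\<And>g x. norm (T g x) = norm x"
    and "\<And>g. (\<lambda>b. T g o\<^sub>L b o\<^sub>L T (- g)) ` A = A"
    and "metrically_free M \<phi> T"
    and "finite S"
    and "\<And>g. a g \<in> A"
    and "\<And>g. g \<notin> S \<Longrightarrow> a g = 0"
  shows "norm (\<Sum>g\<in>S. a g o\<^sub>L T g) \<ge> norm (a 0)"
proof -
  interpret covariant_system M A \<phi> T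
    using assms(3-5,7) by unfold_locales blast+
  have "c \<le> norm (\<Sum>g\<in>S. a g o\<^sub>L T g)" if "0 < c" "c < norm (a 0)" for c
    using assms(8-11) that by (rule norm_crossed_sum_ge)
  then show ?thesis
    by (cases "norm (a 0) = 0") (auto intro: dense_le_bounded[of 0])
qed

end
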